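(* Let $Q$ be an $ADE$ Dynkin type quiver and $\mathcal{E}$ an exact structure on $\operatorname{rep}(Q)$. Let $T,T'\in\operatorname{Tilt}(Q)$. If $T'\approx_{\mathcal{E}}T$, then $\operatorname{GS}_{\mathcal{E}}(T')=\operatorname{GS}_{\mathcal{E}}(T)$.
   Context: $Q$ is a quiver whose underlying graph is a Dynkin diagram of type $A_n$, $D_n$ ($n\ge4$), $E_6$, $E_7$ or $E_8$; $\operatorname{rep}(Q)$ is the (hereditary, abelian) category of finite-dimensional representations over an algebraically closed field. Subcategories are full and additive (closed under finite sums and summands). An exact structure $\mathcal{E}$ is a class of short exact sequences closed under isomorphism, containing split sequences, whose $\mathcal{E}$-monomorphisms and $\mathcal{E}$-epimorphisms are closed under composition, and closed under pushouts and pullbacks along arbitrary morphisms. $\operatorname{Gen}_{\mathcal{E}}(\mathscr{C})$: additively generated by cokernels of $\mathcal{E}$-monomorphisms $X\to Y$ with $Y\in\mathscr{C}$; $\operatorname{Sub}_{\mathcal{E}}(\mathscr{C})$: additively generated by kernels of $\mathcal{E}$-epimorphisms $Y\to X$ with $Y\in\mathscr{C}$; $\operatorname{GS}^0_{\mathcal{E}}(\mathscr{C})=\mathscr{C}$, $\operatorname{GS}^i_{\mathcal{E}}(\mathscr{C})$ additively generated by $\operatorname{Gen}_{\mathcal{E}}(\operatorname{GS}^{i-1}_{\mathcal{E}}(\mathscr{C}))\cup\operatorname{Sub}_{\mathcal{E}}(\operatorname{GS}^{i-1}_{\mathcal{E}}(\mathscr{C}))$, $\operatorname{GS}_{\mathcal{E}}(\mathscr{C})=\bigcup_i\operatorname{GS}^i_{\mathcal{E}}(\mathscr{C})$,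 $\operatorname{GS}_{\mathcal{E}}(T)=\operatorname{GS}_{\mathcal{E}}(\operatorname{add}T)$. $\operatorname{Tilt}(Q)$ is the set of isomorphism classes of tilting representations ($\operatorname{Ext}^1(T,T)=0$ and each projective $P$ fits in $0\to P\to T_0\to T_1\to0$ with $T_i\in\operatorname{add}T$). Approximations: for a subcategory $\mathscr{M}$, a left $\mathscr{M}$-approximation of $X$ is $f:X\to C$, $C\in\mathscr{M}$, through which every map from $X$ to an object of $\mathscr{M}$ factors; minimal if every $\alpha:C\to C$ with $\alpha f=f$ is an isomorphism; a left $(\mathscr{M},\mathcal{E})$-approximation if also $f$ is an $\mathcal{E}$-monomorphism; right versions $g:C\to X$ are dual ($g\beta=g$, $g$ an $\mathcal{E}$-epimorphism). For $T\in\operatorname{Tilt}(Q)$ and indecomposable $U$: if $U$ is a summand, $T=\widetilde T\oplus U$, and $U$ has a minimal left $(\operatorname{add}\widetilde T,\mathcal{E})$-approximation $f$, then $T$ admits a left $\mathcal{E}$-mutation at $U$ and $\mu^-_{U,\mathcal{E}}(T)=\widetilde T\oplus\operatorname{Coker}f$; if $U$ has a minimal right $(\operatorname{add}\widetilde T,\mathcal{E})$-approximation $g$, $T$ admits a right $\mathcal{E}$-mutation and $\mu^+_{U,\mathcal{E}}(T)=\widetilde T\oplus\operatorname{Ker}g$ (at most one of these occurs). $\mu_{U,\mathcal{E}}(T)$ is $\mu^-_{U,\mathcal{E}}(T)$, resp. $\mu^+_{U,\mathcal{E}}(T)$, if the corresponding mutation exists, and $T$ otherwise. $T\approx_{\mathcal{E}}T'$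 iff $T'\cong\mu_{U_m,\mathcal{E}}\circ\cdots\circ\mu_{U_1,\mathcal{E}}(T)$ for some indecomposables $U_1,\dots,U_m$ ($m\ge0$). *)

theory Defs
  imports "Jordan_Normal_Form.Matrix" "HOL-Computational_Algebra.Polynomial"
begin

definition alg_closed :: "'k::field itself \<Rightarrow> bool" where
  "alg_closed _ \<longleftrightarrow> (\<forall>p :: 'k poly. degree p > 0 \<longrightarrow> (\<exists>x. poly p x = 0))"

text \<open>A quiver: vertices 0..<n, and a list of arrows (source, target).\<close>
type_synonym quiver = "nat \<times> (nat \<times> nat) list"

definition nverts :: "quiver \<Rightarrow> nat" where "nverts Q = fst Q"
definition arrs :: "quiver \<Rightarrow> (nat \<times> nat) list" where "arrs Q = snd Q"
definition asrc :: "quiver \<Rightarrow> nat \<Rightarrow> nat" where "asrc Q i = fst (arrs Q ! i)"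
definition atgt :: "quiver \<Rightarrow> nat \<Rightarrow> nat" where "atgt Q i = snd (arrs Q ! i)"

definition path_edges :: "nat \<Rightarrow> nat set set" where
  "path_edges n = {{i, Suc i} | i. Suc i < n}"

definition A_edges :: "nat \<Rightarrow> nat set set" where "A_edges n = path_edges n"
definition D_edges :: "nat \<Rightarrow> nat set set" where
  "D_edges n = path_edges (n - 1) \<union> {{n - 3, n - 1}}"
definition E_edges :: "nat \<Rightarrow> nat set set" where
  "E_edges n = path_edges (n - 1) \<union> {{2, n - 1}}"

definition dynkin_graph :: "nat \<Rightarrow> nat set set \<Rightarrow> bool" where
  "dynkin_graph n G \<longleftrightarrow>
     (n \<ge> 1 \<and> G = A_edges n) \<or> (n \<ge> 4 \<and> G = D_edges n) \<or>
     (n \<in> {6, 7, 8} \<and> G = E_edges n)"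

definition dynkin_ADE :: "quiver \<Rightarrow> bool" where
  "dynkin_ADE Q \<longleftrightarrow>
     (\<forall>(s, t) \<in> set (arrs Q). s < nverts Q \<and> t < nverts Q \<and> s \<noteq> t) \<and>
     distinct (map (\<lambda>(s, t). {s, t}) (arrs Q)) \<and>
     (\<exists>\<sigma>. bij_betw \<sigma> {..<nverts Q} {..<nverts Q} \<and>
          dynkin_graph (nverts Q) ((\<lambda>(s, t). {\<sigma> s, \<sigma> t}) ` set (arrs Q)))"

record 'k rep =
  rdim :: "nat \<Rightarrow> nat"
  rmap :: "nat \<Rightarrow> 'k mat"

type_synonym 'k hom = "nat \<Rightarrow> 'k mat"

definition is_rep :: "quiver \<Rightarrow> 'k::field rep \<Rightarrow> bool" where
  "is_rep Q X \<longleftrightarrow> (\<forall>i < length (arrs Q).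
      rmap X i \<in> carrier_mat (rdim X (atgt Q i)) (rdim X (asrc Q i)))"

definition is_hom :: "quiver \<Rightarrow> 'k::field rep \<Rightarrow> 'k rep \<Rightarrow> 'k hom \<Rightarrow> bool" where
  "is_hom Q X Y f \<longleftrightarrow>
     (\<forall>v < nverts Q. f v \<in> carrier_mat (rdim Y v) (rdim X v)) \<and>
     (\<forall>i < length (arrs Q). rmap Y i * f (asrc Q i) = f (atgt Q i) * rmap X i)"

text \<open>Morphisms are only meaningful on the vertices 0..<n.\<close>
definition heq :: "quiver \<Rightarrow> 'k hom \<Rightarrow> 'k hom \<Rightarrow> bool" where
  "heq Q f g \<longleftrightarrow> (\<forall>v < nverts Q. f v = g v)"

definition hcomp :: "'k::field hom \<Rightarrow> 'k hom \<Rightarrow> 'k hom" where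
  "hcomp g f = (\<lambda>v. g v * f v)"

definition hid :: "'k::field rep \<Rightarrow> 'k hom" where
  "hid X = (\<lambda>v. 1\<^sub>m (rdim X v))"

definition hzero :: "'k::field rep \<Rightarrow> 'k rep \<Rightarrow> 'k hom" where
  "hzero X Y = (\<lambda>v. 0\<^sub>m (rdim Y v) (rdim X v))"

definition is_iso_hom :: "quiver \<Rightarrow> 'k::field rep \<Rightarrow> 'k rep \<Rightarrow> 'k hom \<Rightarrow> bool" where
  "is_iso_hom Q X Y f \<longleftrightarrow> is_hom Q X Y f \<and>
     (\<exists>g. is_hom Q Y X g \<and> heq Q (hcomp g f) (hid X) \<and> heq Q (hcomp f g) (hid Y))"

definition iso :: "quiver \<Rightarrow> 'k::field rep \<Rightarrow> 'k rep \<Rightarrow> bool" where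
  "iso Q X Y \<longleftrightarrow> is_rep Q X \<and> is_rep Q Y \<and> (\<exists>f. is_iso_hom Q X Y f)"

definition is_zero_rep :: "quiver \<Rightarrow> 'k rep \<Rightarrow> bool" where
  "is_zero_rep Q X \<longleftrightarrow> (\<forall>v < nverts Q. rdim X v = 0)"

definition zrep :: "'k::field rep" where
  "zrep = \<lparr>rdim = (\<lambda>v. 0), rmap = (\<lambda>i. 0\<^sub>m 0 0)\<rparr>"

definition dsum :: "quiver \<Rightarrow> 'k::field rep \<Rightarrow> 'k rep \<Rightarrow> 'k rep" where
  "dsum Q X Y = \<lparr>rdim = (\<lambda>v. rdim X v + rdim Y v),
     rmap = (\<lambda>i. four_block_mat
        (rmap X i) (0\<^sub>m (rdim X (atgt Q i)) (rdim Y (asrc Q i)))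
        (0\<^sub>m (rdim Y (atgt Q i)) (rdim X (asrc Q i))) (rmap Y i))\<rparr>"

definition dsum_list :: "quiver \<Rightarrow> 'k::field rep list \<Rightarrow> 'k rep" where
  "dsum_list Q xs = foldr (dsum Q) xs zrep"

definition addcl :: "quiver \<Rightarrow> 'k::field rep set \<Rightarrow> 'k rep set" where
  "addcl Q S = {X. is_rep Q X \<and> (\<exists>xs Y. set xs \<subseteq> S \<and> is_rep Q Y \<and>
                    iso Q (dsum Q X Y) (dsum_list Q xs))}"

definition indec :: "quiver \<Rightarrow> 'k::field rep \<Rightarrow> bool" where
  "indec Q U \<longleftrightarrow> is_rep Q U \<and> \<not> is_zero_rep Q U \<and>
     (\<forall>A B. is_rep Q A \<longrightarrow> is_rep Q B \<longrightarrow> iso Q U (dsum Q A B) \<longrightarrow>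
            is_zero_rep Q A \<or> is_zero_rep Q B)"

type_synonym 'k sq = "'k rep \<times> 'k rep \<times> 'k rep \<times> 'k hom \<times> 'k hom"

definition is_mono :: "quiver \<Rightarrow> 'k::field rep \<Rightarrow> 'k hom \<Rightarrow> bool" where
  "is_mono Q X f \<longleftrightarrow> (\<forall>v < nverts Q. \<forall>x \<in> carrier_vec (rdim X v).
       f v *\<^sub>v x = 0\<^sub>v (dim_row (f v)) \<longrightarrow> x = 0\<^sub>v (rdim X v))"

definition is_epi :: "quiver \<Rightarrow> 'k::field rep \<Rightarrow> 'k rep \<Rightarrow> 'k hom \<Rightarrow> bool" where
  "is_epi Q X Y g \<longleftrightarrow> (\<forall>v < nverts Q. \<forall>y \<in> carrier_vec (rdim Y v).
       \<exists>x \<in> carrier_vec (rdim X v). g v *\<^sub>v x = y)"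

definition ses :: "quiver \<Rightarrow> 'k::field sq \<Rightarrow> bool" where
  "ses Q s \<longleftrightarrow> (case s of (X, Y, Z, f, g) \<Rightarrow>
     is_rep Q X \<and> is_rep Q Y \<and> is_rep Q Z \<and> is_hom Q X Y f \<and> is_hom Q Y Z g \<and>
     is_mono Q X f \<and> is_epi Q Y Z g \<and> heq Q (hcomp g f) (hzero X Z) \<and>
     (\<forall>v < nverts Q. \<forall>y \<in> carrier_vec (rdim Y v).
        g v *\<^sub>v y = 0\<^sub>v (rdim Z v) \<longrightarrow> (\<exists>x \<in> carrier_vec (rdim X v). f v *\<^sub>v x = y)))"

definition iso_seq :: "quiver \<Rightarrow> 'k::field sq \<Rightarrow> 'k sq \<Rightarrow> bool" where
  "iso_seq Q s s' \<longleftrightarrow> (case s of (X, Y, Z, f, g) \<Rightarrow> case s' of (X', Y', Z', f', g') \<Rightarrow>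
     (\<exists>a b c. is_iso_hom Q X X' a \<and> is_iso_hom Q Y Y' b \<and> is_iso_hom Q Z Z' c \<and>
        heq Q (hcomp b f) (hcomp f' a) \<and> heq Q (hcomp c g) (hcomp g' b)))"

definition split_seq :: "quiver \<Rightarrow> 'k::field sq \<Rightarrow> bool" where
  "split_seq Q s \<longleftrightarrow> (case s of (X, Y, Z, f, g) \<Rightarrow>
     (\<exists>r. is_hom Q Y X r \<and> heq Q (hcomp r f) (hid X)))"

definition emono :: "'k::field sq set \<Rightarrow> 'k rep \<Rightarrow> 'k rep \<Rightarrow> 'k hom \<Rightarrow> bool" where
  "emono E X Y f \<longleftrightarrow> (\<exists>Z g. (X, Y, Z, f, g) \<in> E)"

definition eepi :: "'k::field sq set \<Rightarrow> 'k rep \<Rightarrow> 'k rep \<Rightarrow> 'k hom \<Rightarrow> bool" where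
  "eepi E Y Z g \<longleftrightarrow> (\<exists>X f. (X, Y, Z, f, g) \<in> E)"

definition exact_structure :: "quiver \<Rightarrow> 'k::field sq set \<Rightarrow> bool" where
  "exact_structure Q E \<longleftrightarrow>
     (\<forall>s \<in> E. ses Q s) \<and>
     (\<forall>s \<in> E. \<forall>s'. ses Q s' \<longrightarrow> iso_seq Q s s' \<longrightarrow> s' \<in> E) \<and>
     (\<forall>s. ses Q s \<longrightarrow> split_seq Q s \<longrightarrow> s \<in> E) \<and>
     (\<forall>X Y W f f'. emono E X Y f \<longrightarrow> emono E Y W f' \<longrightarrow> emono E X W (hcomp f' f)) \<and>
     (\<forall>X Y W g g'. eepi E X Y g \<longrightarrow> eepi E Y W g' \<longrightarrow> eepi E X W (hcomp g' g)) \<and>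
     \<comment> \<open>closed under pushouts along arbitrary morphisms\<close>
     (\<forall>X Y Z f g X' h Y' f' h' g'. (X, Y, Z, f, g) \<in> E \<longrightarrow> is_rep Q X' \<longrightarrow>
        is_hom Q X X' h \<longrightarrow> is_rep Q Y' \<longrightarrow> is_hom Q X' Y' f' \<longrightarrow> is_hom Q Y Y' h' \<longrightarrow>
        heq Q (hcomp h' f) (hcomp f' h) \<longrightarrow>
        (\<forall>W a b. is_rep Q W \<longrightarrow> is_hom Q Y W a \<longrightarrow> is_hom Q X' W b \<longrightarrow>
            heq Q (hcomp a f) (hcomp b h) \<longrightarrow>
            (\<exists>u. is_hom Q Y' W u \<and> heq Q (hcomp u h') a \<and> heq Q (hcomp u f') b \<and>
                 (\<forall>u'. is_hom Q Y' W u' \<longrightarrow> heq Q (hcomp u' h') a \<longrightarrow>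
                        heq Q (hcomp u' f') b \<longrightarrow> heq Q u u'))) \<longrightarrow>
        is_hom Q Y' Z g' \<longrightarrow> heq Q (hcomp g' h') g \<longrightarrow> heq Q (hcomp g' f') (hzero X' Z) \<longrightarrow>
        (X', Y', Z, f', g') \<in> E) \<and>
     \<comment> \<open>closed under pullbacks along arbitrary morphisms\<close>
     (\<forall>X Y Z f g Z' h Y' g' h' f'. (X, Y, Z, f, g) \<in> E \<longrightarrow> is_rep Q Z' \<longrightarrow>
        is_hom Q Z' Z h \<longrightarrow> is_rep Q Y' \<longrightarrow> is_hom Q Y' Z' g' \<longrightarrow> is_hom Q Y' Y h' \<longrightarrow>
        heq Q (hcomp g h') (hcomp h g') \<longrightarrow>
        (\<forall>W a b. is_rep Q W \<longrightarrow> is_hom Q W Y a \<longrightarrow> is_hom Q W Z' b \<longrightarrow>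
            heq Q (hcomp g a) (hcomp h b) \<longrightarrow>
            (\<exists>u. is_hom Q W Y' u \<and> heq Q (hcomp h' u) a \<and> heq Q (hcomp g' u) b \<and>
                 (\<forall>u'. is_hom Q W Y' u' \<longrightarrow> heq Q (hcomp h' u') a \<longrightarrow>
                        heq Q (hcomp g' u') b \<longrightarrow> heq Q u u'))) \<longrightarrow>
        is_hom Q X Y' f' \<longrightarrow> heq Q (hcomp h' f') f \<longrightarrow> heq Q (hcomp g' f') (hzero X Z') \<longrightarrow>
        (X, Y', Z', f', g') \<in> E)"

definition Gen :: "quiver \<Rightarrow> 'k::field sq set \<Rightarrow> 'k rep set \<Rightarrow> 'k rep set" where
  "Gen Q E C = addcl Q {Z. \<exists>X Y f g. (X, Y, Z, f, g) \<in> E \<and> Y \<in> C}"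

definition Sub :: "quiver \<Rightarrow> 'k::field sq set \<Rightarrow> 'k rep set \<Rightarrow> 'k rep set" where
  "Sub Q E C = addcl Q {X. \<exists>Y Z f g. (X, Y, Z, f, g) \<in> E \<and> Y \<in> C}"

fun GSi :: "quiver \<Rightarrow> 'k::field sq set \<Rightarrow> 'k rep set \<Rightarrow> nat \<Rightarrow> 'k rep set" where
  "GSi Q E C 0 = C"
| "GSi Q E C (Suc i) = addcl Q (Gen Q E (GSi Q E C i) \<union> Sub Q E (GSi Q E C i))"

definition GS :: "quiver \<Rightarrow> 'k::field sq set \<Rightarrow> 'k rep set \<Rightarrow> 'k rep set" where
  "GS Q E C = (\<Union>i. GSi Q E C i)"

definition GS_rep :: "quiver \<Rightarrow> 'k::field sq set \<Rightarrow> 'k rep \<Rightarrow> 'k rep set" where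
  "GS_rep Q E T = GS Q E (addcl Q {T})"

definition projective :: "quiver \<Rightarrow> 'k::field rep \<Rightarrow> bool" where
  "projective Q P \<longleftrightarrow> is_rep Q P \<and>
     (\<forall>Y Z g h. is_rep Q Y \<longrightarrow> is_rep Q Z \<longrightarrow> is_hom Q Y Z g \<longrightarrow> is_epi Q Y Z g \<longrightarrow>
        is_hom Q P Z h \<longrightarrow> (\<exists>h'. is_hom Q P Y h' \<and> heq Q (hcomp g h') h))"

text \<open>Ext^1(T,T) = 0, in Yoneda form: every extension of T by T splits.\<close>
definition ext1_vanishes :: "quiver \<Rightarrow> 'k::field rep \<Rightarrow> 'k rep \<Rightarrow> bool" where
  "ext1_vanishes Q Z X \<longleftrightarrow> (\<forall>Y f g. ses Q (X, Y, Z, f, g) \<longrightarrow> split_seq Q (X, Y, Z, f, g))"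

definition tilting :: "quiver \<Rightarrow> 'k::field rep \<Rightarrow> bool" where
  "tilting Q T \<longleftrightarrow> is_rep Q T \<and> ext1_vanishes Q T T \<and>
     (\<forall>P. projective Q P \<longrightarrow>
        (\<exists>T0 T1 f g. T0 \<in> addcl Q {T} \<and> T1 \<in> addcl Q {T} \<and> ses Q (P, T0, T1, f, g)))"

definition left_approx :: "quiver \<Rightarrow> 'k::field rep set \<Rightarrow> 'k rep \<Rightarrow> 'k rep \<Rightarrow> 'k hom \<Rightarrow> bool" where
  "left_approx Q M X C f \<longleftrightarrow> C \<in> M \<and> is_hom Q X C f \<and>
     (\<forall>C' h. C' \<in> M \<longrightarrow> is_hom Q X C' h \<longrightarrow> (\<exists>h'. is_hom Q C C' h' \<and> heq Q (hcomp h' f) h))"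

definition min_left_approx :: "quiver \<Rightarrow> 'k::field rep set \<Rightarrow> 'k rep \<Rightarrow> 'k rep \<Rightarrow> 'k hom \<Rightarrow> bool" where
  "min_left_approx Q M X C f \<longleftrightarrow> left_approx Q M X C f \<and>
     (\<forall>\<alpha>. is_hom Q C C \<alpha> \<longrightarrow> heq Q (hcomp \<alpha> f) f \<longrightarrow> is_iso_hom Q C C \<alpha>)"

definition right_approx :: "quiver \<Rightarrow> 'k::field rep set \<Rightarrow> 'k rep \<Rightarrow> 'k rep \<Rightarrow> 'k hom \<Rightarrow> bool" where
  "right_approx Q M X C g \<longleftrightarrow> C \<in> M \<and> is_hom Q C X g \<and>
     (\<forall>C' h. C' \<in> M \<longrightarrow> is_hom Q C' X h \<longrightarrow> (\<exists>h'. is_hom Q C' C h' \<and> heq Q (hcomp g h') h))"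

definition min_right_approx :: "quiver \<Rightarrow> 'k::field rep set \<Rightarrow> 'k rep \<Rightarrow> 'k rep \<Rightarrow> 'k hom \<Rightarrow> bool" where
  "min_right_approx Q M X C g \<longleftrightarrow> right_approx Q M X C g \<and>
     (\<forall>\<beta>. is_hom Q C C \<beta> \<longrightarrow> heq Q (hcomp g \<beta>) g \<longrightarrow> is_iso_hom Q C C \<beta>)"

text \<open>Left E-mutation of T at U: T = Tt (+) U, f : U -> C a minimal left (add Tt, E)-approximation
  (f is an E-monomorphism, i.e. the first map of a sequence in E whose third term is Coker f),
  and the result is Tt (+) Coker f (up to isomorphism).\<close>
definition left_mut :: "quiver \<Rightarrow> 'k::field sq set \<Rightarrow> 'k rep \<Rightarrow> 'k rep \<Rightarrow> 'k rep \<Rightarrow> bool" where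
  "left_mut Q E T U T' \<longleftrightarrow> (\<exists>Tt C f Z g. is_rep Q Tt \<and> iso Q T (dsum Q Tt U) \<and>
     min_left_approx Q (addcl Q {Tt}) U C f \<and> (U, C, Z, f, g) \<in> E \<and>
     iso Q T' (dsum Q Tt Z))"

definition right_mut :: "quiver \<Rightarrow> 'k::field sq set \<Rightarrow> 'k rep \<Rightarrow> 'k rep \<Rightarrow> 'k rep \<Rightarrow> bool" where
  "right_mut Q E T U T' \<longleftrightarrow> (\<exists>Tt C g K f. is_rep Q Tt \<and> iso Q T (dsum Q Tt U) \<and>
     min_right_approx Q (addcl Q {Tt}) U C g \<and> (K, C, U, f, g) \<in> E \<and>
     iso Q T' (dsum Q Tt K))"

definition mutation :: "quiver \<Rightarrow> 'k::field sq set \<Rightarrow> 'k rep \<Rightarrow> 'k rep \<Rightarrow> 'k rep \<Rightarrow> bool" where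
  "mutation Q E U T T' \<longleftrightarrow> left_mut Q E T U T' \<or> right_mut Q E T U T' \<or>
     ((\<nexists>X. left_mut Q E T U X) \<and> (\<nexists>X. right_mut Q E T U X) \<and> iso Q T T')"

definition mut_step :: "quiver \<Rightarrow> 'k::field sq set \<Rightarrow> 'k rep \<Rightarrow> 'k rep \<Rightarrow> bool" where
  "mut_step Q E T T' \<longleftrightarrow> tilting Q T \<and> (\<exists>U. indec Q U \<and> mutation Q E U T T')"

definition mut_equiv :: "quiver \<Rightarrow> 'k::field sq set \<Rightarrow> 'k rep \<Rightarrow> 'k rep \<Rightarrow> bool" where
  "mut_equiv Q E T T' \<longleftrightarrow> (\<exists>X. (mut_step Q E)\<^sup>*\<^sup>* T X \<and> iso Q X T')"

end

theory Submission
  imports Defs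
begin

(* A mutation exchanges the summand U of T = Tt (+) U for the other end Z of a sequence in E
   whose middle term C lies in add Tt.  As add Tt is contained in add T, the middle term C lies in
   GS(T), so Z lies in Gen or Sub of GS(T), and hence so does all of add (Tt (+) Z).  The same
   sequence read from the mutated side recovers U, so mutation preserves GS, and so does every
   finite chain of mutations. *)

section \<open>Morphisms and isomorphisms\<close>

definition wf_quiver :: "quiver \<Rightarrow> bool" where
  "wf_quiver Q \<longleftrightarrow> (\<forall>i < length (arrs Q). asrc Q i < nverts Q \<and> atgt Q i < nverts Q)"

lemma dynkin_ADE_imp_wf_quiver: "dynkin_ADE Q \<Longrightarrow> wf_quiver Q"
  unfolding dynkin_ADE_def wf_quiver_def asrc_def atgt_def
  by (metis (no_types, lifting) case_prodD nth_mem prod.collapse)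

lemma is_repD:
  "is_rep Q X \<Longrightarrow> i < length (arrs Q) \<Longrightarrow>
   rmap X i \<in> carrier_mat (rdim X (atgt Q i)) (rdim X (asrc Q i))"
  unfolding is_rep_def by auto

lemma is_homD_carrier:
  "is_hom Q X Y f \<Longrightarrow> v < nverts Q \<Longrightarrow> f v \<in> carrier_mat (rdim Y v) (rdim X v)"
  unfolding is_hom_def by auto

lemma is_homD_comm:
  "is_hom Q X Y f \<Longrightarrow> i < length (arrs Q) \<Longrightarrow>
   rmap Y i * f (asrc Q i) = f (atgt Q i) * rmap X i"
  unfolding is_hom_def by auto

lemma is_rep_zrep: "is_rep Q (zrep :: 'k::field rep)"
  unfolding is_rep_def zrep_def by auto

lemma is_rep_dsum: "is_rep Q A \<Longrightarrow> is_rep Q B \<Longrightarrow> is_rep Q (dsum Q A B)"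
  unfolding is_rep_def dsum_def by auto

lemma is_hom_hid: "is_rep Q X \<Longrightarrow> is_hom Q X X (hid X)"
  unfolding is_hom_def hid_def by (auto dest: is_repD)

lemma is_hom_hzero:
  assumes X: "is_rep Q X" and Y: "is_rep Q Y"
  shows "is_hom Q X Y (hzero X Y)"
  unfolding is_hom_def hzero_def
proof (intro conjI allI impI)
  fix i assume i: "i < length (arrs Q)"
  show "rmap Y i * 0\<^sub>m (rdim Y (asrc Q i)) (rdim X (asrc Q i)) =
        0\<^sub>m (rdim Y (atgt Q i)) (rdim X (atgt Q i)) * rmap X i"
    using is_repD[OF X i] is_repD[OF Y i] by (metis left_mult_zero_mat right_mult_zero_mat)
qed auto

lemma is_hom_hcomp:
  assumes Q: "wf_quiver Q" and r: "is_rep Q A" "is_rep Q B" "is_rep Q C"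
    and f: "is_hom Q A B f" and g: "is_hom Q B C g"
  shows "is_hom Q A C (hcomp g f)"
  unfolding is_hom_def hcomp_def
proof (intro conjI allI impI)
  fix v assume "v < nverts Q"
  then show "g v * f v \<in> carrier_mat (rdim C v) (rdim A v)"
    using is_homD_carrier[OF f] is_homD_carrier[OF g] by (meson mult_carrier_mat)
next
  fix i assume i: "i < length (arrs Q)"
  define s t where "s = asrc Q i" and "t = atgt Q i"
  have st: "s < nverts Q" "t < nverts Q" using Q i unfolding wf_quiver_def s_def t_def by auto
  note dims = is_homD_carrier[OF f st(1)] is_homD_carrier[OF f st(2)]
    is_homD_carrier[OF g st(1)] is_homD_carrier[OF g st(2)]
    is_repD[OF r(1) i, folded s_def t_def] is_repD[OF r(2) i, folded s_def t_def]
    is_repD[OF r(3) i, folded s_def t_def]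
  have "rmap C i * (g s * f s) = (rmap C i * g s) * f s"
    using dims by (intro assoc_mult_mat[symmetric])
  also have "rmap C i * g s = g t * rmap B i"
    using is_homD_comm[OF g i] unfolding s_def t_def .
  also have "(g t * rmap B i) * f s = g t * (rmap B i * f s)"
    using dims by (intro assoc_mult_mat)
  also have "rmap B i * f s = f t * rmap A i"
    using is_homD_comm[OF f i] unfolding s_def t_def .
  also have "g t * (f t * rmap A i) = (g t * f t) * rmap A i"
    using dims by (intro assoc_mult_mat[symmetric])
  finally show "rmap C i * (g (asrc Q i) * f (asrc Q i)) = g (atgt Q i) * f (atgt Q i) * rmap A i"
    unfolding s_def t_def .
qed

lemma iso_refl: "is_rep Q X \<Longrightarrow> iso Q X X"
  unfolding iso_def is_iso_hom_def
  using is_hom_hid[of Q X]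
  by (intro conjI exI[of _ "hid X"]) (auto simp: heq_def hcomp_def hid_def)

lemma iso_sym: "iso Q X Y \<Longrightarrow> iso Q Y X"
  unfolding iso_def is_iso_hom_def by blast

lemma hcomp_inverse_hcomp:
  assumes f: "is_hom Q X Y f" and g: "is_hom Q Y X g"
    and f': "is_hom Q Y Z f'" and g': "is_hom Q Z Y g'"
    and gf: "heq Q (hcomp g f) (hid X)" and gf': "heq Q (hcomp g' f') (hid Y)"
  shows "heq Q (hcomp (hcomp g g') (hcomp f' f)) (hid X)"
  unfolding heq_def
proof (intro allI impI)
  fix v assume v: "v < nverts Q"
  note dims = is_homD_carrier[OF f v] is_homD_carrier[OF g v]
    is_homD_carrier[OF f' v] is_homD_carrier[OF g' v]
  have "(g v * g' v) * (f' v * f v) = g v * (g' v * (f' v * f v))"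
    using dims by (intro assoc_mult_mat) auto
  also have "g' v * (f' v * f v) = (g' v * f' v) * f v"
    using dims by (intro assoc_mult_mat[symmetric])
  also have "g' v * f' v = 1\<^sub>m (rdim Y v)"
    using gf' v by (simp add: heq_def hcomp_def hid_def)
  also have "g v * (1\<^sub>m (rdim Y v) * f v) = g v * f v"
    using dims by simp
  also have "\<dots> = hid X v"
    using gf v by (simp add: heq_def hcomp_def)
  finally show "hcomp (hcomp g g') (hcomp f' f) v = hid X v"
    unfolding hcomp_def .
qed

lemma iso_trans:
  assumes Q: "wf_quiver Q" and XY: "iso Q X Y" and YZ: "iso Q Y Z"
  shows "iso Q X Z"
proof -
  obtain f g where r: "is_rep Q X" "is_rep Q Y" and f: "is_hom Q X Y f" and g: "is_hom Q Y X g"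
    and fg: "heq Q (hcomp g f) (hid X)" "heq Q (hcomp f g) (hid Y)"
    using XY unfolding iso_def is_iso_hom_def by blast
  obtain f' g' where r': "is_rep Q Z" and f': "is_hom Q Y Z f'" and g': "is_hom Q Z Y g'"
    and fg': "heq Q (hcomp g' f') (hid Y)" "heq Q (hcomp f' g') (hid Z)"
    using YZ unfolding iso_def is_iso_hom_def by blast
  show ?thesis
    unfolding iso_def is_iso_hom_def
    using r r' is_hom_hcomp[OF Q r r' f f'] is_hom_hcomp[OF Q r' r(2,1) g' g]
      hcomp_inverse_hcomp[OF f g f' g' fg(1) fg'(1)] hcomp_inverse_hcomp[OF g' f' g f fg'(2) fg(2)]
    by blast
qed

section \<open>Direct sums\<close>

lemma four_block_diag_mult:
  fixes A1 :: "'k::field mat"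
  assumes "A1 \<in> carrier_mat r1 n1" "D1 \<in> carrier_mat r2 n2"
    "A2 \<in> carrier_mat n1 c1" "D2 \<in> carrier_mat n2 c2"
  shows "four_block_mat A1 (0\<^sub>m r1 n2) (0\<^sub>m r2 n1) D1 * four_block_mat A2 (0\<^sub>m n1 c2) (0\<^sub>m n2 c1) D2
       = four_block_mat (A1 * A2) (0\<^sub>m r1 c2) (0\<^sub>m r2 c1) (D1 * D2)"
  using assms by (subst mult_four_block_mat[of _ r1 n1 _ n2 _ r2 _ _ c1 _ c2]) auto

lemma four_block_diag_empty:
  fixes A :: "'k::field mat"
  assumes "A \<in> carrier_mat r c"
  shows "four_block_mat A (0\<^sub>m r 0) (0\<^sub>m 0 c) (0\<^sub>m 0 0) = A"
  using assms by (intro eq_matI) auto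

definition hdsum :: "'k::field rep \<Rightarrow> 'k rep \<Rightarrow> 'k rep \<Rightarrow> 'k rep \<Rightarrow> 'k hom \<Rightarrow> 'k hom \<Rightarrow> 'k hom" where
  "hdsum A B A' B' f f' =
     (\<lambda>v. four_block_mat (f v) (0\<^sub>m (rdim A' v) (rdim B v)) (0\<^sub>m (rdim B' v) (rdim A v)) (f' v))"

lemma is_hom_hdsum:
  assumes Q: "wf_quiver Q" and r: "is_rep Q A" "is_rep Q B" "is_rep Q A'" "is_rep Q B'"
    and f: "is_hom Q A A' f" and f': "is_hom Q B B' f'"
  shows "is_hom Q (dsum Q A B) (dsum Q A' B') (hdsum A B A' B' f f')"
  unfolding is_hom_def
proof (intro conjI allI impI)
  fix v assume "v < nverts Q"
  then show "hdsum A B A' B' f f' v \<in> carrier_mat (rdim (dsum Q A' B') v) (rdim (dsum Q A B) v)"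
    using is_homD_carrier[OF f] is_homD_carrier[OF f'] unfolding hdsum_def dsum_def by auto
next
  fix i assume i: "i < length (arrs Q)"
  define s t where "s = asrc Q i" and "t = atgt Q i"
  have st: "s < nverts Q" "t < nverts Q" using Q i unfolding wf_quiver_def s_def t_def by auto
  note dims = is_homD_carrier[OF f st(1)] is_homD_carrier[OF f st(2)]
    is_homD_carrier[OF f' st(1)] is_homD_carrier[OF f' st(2)]
    is_repD[OF r(1) i] is_repD[OF r(2) i] is_repD[OF r(3) i] is_repD[OF r(4) i]
  have "rmap (dsum Q A' B') i * hdsum A B A' B' f f' s
     = four_block_mat (rmap A' i * f s) (0\<^sub>m (rdim A' t) (rdim B s))
         (0\<^sub>m (rdim B' t) (rdim A s)) (rmap B' i * f' s)"
    unfolding dsum_def hdsum_def using dims unfolding s_def t_def by (simp add: four_block_diag_mult)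
  also have "\<dots> = four_block_mat (f t * rmap A i) (0\<^sub>m (rdim A' t) (rdim B s))
         (0\<^sub>m (rdim B' t) (rdim A s)) (f' t * rmap B i)"
    using is_homD_comm[OF f i] is_homD_comm[OF f' i] unfolding s_def t_def by simp
  also have "\<dots> = hdsum A B A' B' f f' t * rmap (dsum Q A B) i"
    unfolding dsum_def hdsum_def using dims unfolding s_def t_def by (simp add: four_block_diag_mult)
  finally show "rmap (dsum Q A' B') i * hdsum A B A' B' f f' (asrc Q i) =
      hdsum A B A' B' f f' (atgt Q i) * rmap (dsum Q A B) i"
    unfolding s_def t_def .
qed

lemma hcomp_hdsum_inverse:
  assumes f: "is_hom Q A A' f" and f': "is_hom Q B B' f'"
    and g: "is_hom Q A' A g" and g': "is_hom Q B' B g'"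
    and gf: "heq Q (hcomp g f) (hid A)" and gf': "heq Q (hcomp g' f') (hid B)"
  shows "heq Q (hcomp (hdsum A' B' A B g g') (hdsum A B A' B' f f')) (hid (dsum Q A B))"
  unfolding heq_def
proof (intro allI impI)
  fix v assume v: "v < nverts Q"
  have "g v * f v = 1\<^sub>m (rdim A v)" "g' v * f' v = 1\<^sub>m (rdim B v)"
    using gf gf' v unfolding heq_def hcomp_def hid_def by auto
  then show "hcomp (hdsum A' B' A B g g') (hdsum A B A' B' f f') v = hid (dsum Q A B) v"
    using is_homD_carrier[OF f v] is_homD_carrier[OF f' v]
      is_homD_carrier[OF g v] is_homD_carrier[OF g' v]
    by (simp add: hcomp_def hdsum_def four_block_diag_mult hid_def dsum_def)
qed

lemma iso_dsum_cong:
  assumes Q: "wf_quiver Q" and A: "iso Q A A'" and B: "iso Q B B'"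
  shows "iso Q (dsum Q A B) (dsum Q A' B')"
proof -
  obtain f g where r: "is_rep Q A" "is_rep Q A'" and f: "is_hom Q A A' f" and g: "is_hom Q A' A g"
    and fg: "heq Q (hcomp g f) (hid A)" "heq Q (hcomp f g) (hid A')"
    using A unfolding iso_def is_iso_hom_def by blast
  obtain f' g' where r': "is_rep Q B" "is_rep Q B'" and f': "is_hom Q B B' f'"
    and g': "is_hom Q B' B g'"
    and fg': "heq Q (hcomp g' f') (hid B)" "heq Q (hcomp f' g') (hid B')"
    using B unfolding iso_def is_iso_hom_def by blast
  show ?thesis
    unfolding iso_def is_iso_hom_def
    using is_hom_hdsum[OF Q r(1) r'(1) r(2) r'(2) f f'] is_hom_hdsum[OF Q r(2) r'(2) r(1) r'(1) g g']
      hcomp_hdsum_inverse[OF f f' g g' fg(1) fg'(1)] hcomp_hdsum_inverse[OF g g' f f' fg(2) fg'(2)]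
      is_rep_dsum r r'
    by blast
qed

lemma iso_dsum_zrep:
  assumes A: "is_rep Q A"
  shows "iso Q (dsum Q A zrep) A"
proof -
  have dim: "rdim (dsum Q A zrep) = rdim A"
    unfolding dsum_def zrep_def by auto
  have map: "rmap (dsum Q A zrep) i = rmap A i" if "i < length (arrs Q)" for i
    using is_repD[OF A that] unfolding dsum_def zrep_def by (simp add: four_block_diag_empty)
  have "is_hom Q (dsum Q A zrep) A (hid A)" "is_hom Q A (dsum Q A zrep) (hid A)"
    using is_hom_hid[OF A] map unfolding is_hom_def dim by auto
  then show ?thesis
    unfolding iso_def is_iso_hom_def
    using A is_rep_dsum[OF A is_rep_zrep]
    by (intro conjI exI[of _ "hid A"]) (auto simp: heq_def hcomp_def hid_def dim)
qed

section \<open>Additive closure\<close>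

lemma addcl_mono: "S \<subseteq> S' \<Longrightarrow> addcl Q S \<subseteq> addcl Q S'"
  unfolding addcl_def by blast

lemma addcl_is_rep: "X \<in> addcl Q S \<Longrightarrow> is_rep Q X"
  unfolding addcl_def by blast

lemma in_addcl: "is_rep Q X \<Longrightarrow> X \<in> S \<Longrightarrow> X \<in> addcl Q S"
  unfolding addcl_def
  by (intro CollectI conjI exI[of _ "[X]"] exI[of _ zrep])
     (auto simp: dsum_list_def is_rep_zrep intro!: iso_refl is_rep_dsum)

lemma subset_addcl: "\<forall>X\<in>S. is_rep Q X \<Longrightarrow> S \<subseteq> addcl Q S"
  using in_addcl by blast

lemma iso_dsum_list_replicate:
  assumes Q: "wf_quiver Q" and AB: "iso Q A B"
  shows "iso Q (dsum_list Q (replicate n A)) (dsum_list Q (replicate n B))"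
proof (induction n)
  case 0
  then show ?case by (simp add: dsum_list_def iso_refl is_rep_zrep)
next
  case (Suc n)
  then show ?case using iso_dsum_cong[OF Q AB] by (simp add: dsum_list_def)
qed

lemma addcl_singleton_iso:
  assumes Q: "wf_quiver Q" and AB: "iso Q A B"
  shows "addcl Q {A} \<subseteq> addcl Q {B}"
proof
  fix W assume "W \<in> addcl Q {A}"
  then obtain xs Y where W: "is_rep Q W" "set xs \<subseteq> {A}" "is_rep Q Y"
      and WY: "iso Q (dsum Q W Y) (dsum_list Q xs)"
    unfolding addcl_def by blast
  obtain n where xs: "xs = replicate n A"
    using W(2) by (metis replicate_length_same singletonD subsetD)
  have "iso Q (dsum Q W Y) (dsum_list Q (replicate n B))"
    using iso_trans[OF Q WY[unfolded xs] iso_dsum_list_replicate[OF Q AB]] .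
  then show "W \<in> addcl Q {B}"
    unfolding addcl_def using W by (intro CollectI conjI exI) auto
qed

lemma addcl_dsum_left:
  assumes Q: "wf_quiver Q" and r: "is_rep Q A" "is_rep Q B" and T: "iso Q T (dsum Q A B)"
  shows "A \<in> addcl Q {T}"
proof -
  have "is_rep Q T" using T unfolding iso_def by blast
  then have "iso Q (dsum Q A B) (dsum Q T zrep)"
    using iso_trans[OF Q iso_sym[OF T] iso_sym[OF iso_dsum_zrep]] by blast
  then show ?thesis
    unfolding addcl_def
    by (intro CollectI conjI exI[of _ "[T]"] exI[of _ B]) (auto simp: dsum_list_def r)
qed

lemma dsum_in_addcl:
  assumes Q: "wf_quiver Q" and r: "is_rep Q A" "is_rep Q B" and S: "A \<in> S" "B \<in> S"
  shows "dsum Q A B \<in> addcl Q S"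
proof -
  have "iso Q (dsum Q (dsum Q A B) zrep) (dsum Q A (dsum Q B zrep))"
    using iso_trans[OF Q iso_dsum_zrep[OF is_rep_dsum[OF r]]
        iso_dsum_cong[OF Q iso_refl[OF r(1)] iso_sym[OF iso_dsum_zrep[OF r(2)]]]] .
  then show ?thesis
    unfolding addcl_def
    by (intro CollectI conjI exI[of _ "[A, B]"] exI[of _ zrep])
       (auto simp: dsum_list_def r S is_rep_zrep is_rep_dsum)
qed

section \<open>The closure GS\<close>

lemma exact_structure_ses: "exact_structure Q E \<Longrightarrow> s \<in> E \<Longrightarrow> ses Q s"
  unfolding exact_structure_def by (elim conjE) (erule bspec)

lemma exact_structure_split: "exact_structure Q E \<Longrightarrow> ses Q s \<Longrightarrow> split_seq Q s \<Longrightarrow> s \<in> E"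
  unfolding exact_structure_def by (elim conjE) (erule allE, erule impE, assumption, erule impE)

lemma zrep_hid_seq_in_exact_structure:
  assumes E: "exact_structure Q E" and X: "is_rep Q X"
  shows "(zrep, X, X, hzero zrep X, hid X) \<in> E"
proof (rule exact_structure_split[OF E])
  have "is_mono Q zrep (hzero zrep X)"
    unfolding is_mono_def zrep_def by auto
  moreover have "is_epi Q X X (hid X)"
    unfolding is_epi_def hid_def by (metis one_mult_mat_vec)
  moreover have "\<exists>x \<in> carrier_vec (rdim zrep v). hzero zrep X v *\<^sub>v x = y"
    if "y \<in> carrier_vec (rdim X v)" "hid X v *\<^sub>v y = 0\<^sub>v (rdim X v)" for v y
    using that by (intro bexI[of _ "0\<^sub>v 0"]) (auto simp: zrep_def hzero_def hid_def)
  ultimately show "ses Q (zrep, X, X, hzero zrep X, hid X)"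
    unfolding ses_def prod.case
    using X is_rep_zrep[of Q] is_hom_hzero[OF is_rep_zrep X] is_hom_hid[OF X]
    by (auto simp: heq_def hcomp_def hid_def hzero_def)
  show "split_seq Q (zrep, X, X, hzero zrep X, hid X)"
    unfolding split_seq_def prod.case
    using is_hom_hzero[OF X is_rep_zrep]
    by (intro exI[of _ "hzero X zrep"] conjI)
       (auto simp: heq_def hcomp_def hid_def hzero_def zrep_def)
qed

lemma seq_ends_in_Gen_Sub:
  assumes E: "exact_structure Q E" and s: "(X, Y, Z, f, g) \<in> E" and Y: "Y \<in> S"
  shows "Z \<in> Gen Q E S" "X \<in> Sub Q E S"
proof -
  have "is_rep Q X" "is_rep Q Z"
    using exact_structure_ses[OF E s] unfolding ses_def by auto
  then show "Z \<in> Gen Q E S" "X \<in> Sub Q E S"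
    unfolding Gen_def Sub_def using s Y by (auto intro!: in_addcl)
qed

lemma subset_Gen:
  assumes E: "exact_structure Q E" and S: "\<forall>X\<in>S. is_rep Q X"
  shows "S \<subseteq> Gen Q E S"
  using seq_ends_in_Gen_Sub(1)[OF E zrep_hid_seq_in_exact_structure[OF E]] S by blast

lemma Gen_mono: "C \<subseteq> C' \<Longrightarrow> Gen Q E C \<subseteq> Gen Q E C'"
  unfolding Gen_def by (rule addcl_mono) blast

lemma Sub_mono: "C \<subseteq> C' \<Longrightarrow> Sub Q E C \<subseteq> Sub Q E C'"
  unfolding Sub_def by (rule addcl_mono) blast

lemma GSi_mono: "C \<subseteq> C' \<Longrightarrow> GSi Q E C i \<subseteq> GSi Q E C' i"
proof (induction i)
  case (Suc i)
  then show ?case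
    using Gen_mono[of "GSi Q E C i" "GSi Q E C' i" Q E] Sub_mono[of "GSi Q E C i" "GSi Q E C' i" Q E]
    by (simp only: GSi.simps) (intro addcl_mono Un_mono; simp)
qed simp

lemma GSi_GSi: "GSi Q E (GSi Q E D k) i = GSi Q E D (k + i)"
  by (induction i) auto

lemma GSi_is_rep: "\<forall>X\<in>D. is_rep Q X \<Longrightarrow> X \<in> GSi Q E D k \<Longrightarrow> is_rep Q X"
  by (cases k) (auto dest: addcl_is_rep)

lemma addcl_GSi_subset:
  assumes E: "exact_structure Q E" and D: "\<forall>X\<in>D. is_rep Q X"
  shows "addcl Q (GSi Q E D k) \<subseteq> GSi Q E D (Suc k)"
proof -
  have "GSi Q E D k \<subseteq> Gen Q E (GSi Q E D k)"
    using subset_Gen[OF E] GSi_is_rep[OF D] by blast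
  then show ?thesis
    by (simp add: addcl_mono le_supI1)
qed

lemma GSi_Suc_subset:
  assumes E: "exact_structure Q E" and D: "\<forall>X\<in>D. is_rep Q X"
  shows "GSi Q E D k \<subseteq> GSi Q E D (Suc k)"
  using subset_addcl[of "GSi Q E D k" Q] GSi_is_rep[OF D, of _ E k] addcl_GSi_subset[OF E D, of k]
  by blast

lemma GSi_mono_level:
  assumes E: "exact_structure Q E" and D: "\<forall>X\<in>D. is_rep Q X" and km: "k \<le> m"
  shows "GSi Q E D k \<subseteq> GSi Q E D m"
  using km
proof (induction m rule: dec_induct)
  case (step n)
  then show ?case
    using GSi_Suc_subset[OF E D, of n] by blast
qed simp

lemma GS_subset_if_subset_GSi:
  assumes "C \<subseteq> GSi Q E D k"
  shows "GS Q E C \<subseteq> GS Q E D"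
proof -
  have "GSi Q E C i \<subseteq> GSi Q E D (k + i)" for i
    using GSi_mono[OF assms, of Q E i] by (simp add: GSi_GSi)
  then show ?thesis unfolding GS_def by blast
qed

section \<open>Mutation invariance\<close>

lemma addcl_exchange_subset_GSi:
  assumes Q: "wf_quiver Q" and E: "exact_structure Q E" and Tt: "is_rep Q Tt"
    and T1: "iso Q T1 (dsum Q Tt U)" and T2: "iso Q T2 (dsum Q Tt Z)"
    and C: "C \<in> addcl Q {Tt}"
    and seq: "(U, C, Z, f, g) \<in> E \<or> (Z, C, U, f, g) \<in> E"
  shows "addcl Q {T2} \<subseteq> GSi Q E (addcl Q {T1}) 4"
proof -
  define D where "D = addcl Q {T1}"
  have D: "\<forall>X\<in>D. is_rep Q X" unfolding D_def using addcl_is_rep by blast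
  have UZ: "is_rep Q U" "is_rep Q Z"
    using seq exact_structure_ses[OF E] unfolding ses_def by auto
  have Tt0: "Tt \<in> GSi Q E D 0"
    using addcl_dsum_left[OF Q Tt UZ(1) T1] unfolding D_def by simp
  have "C \<in> GSi Q E D 1"
    using addcl_mono[of "{Tt}" "GSi Q E D 0" Q] Tt0 C addcl_GSi_subset[OF E D, of 0] by auto
  then have "Z \<in> Gen Q E (GSi Q E D 1) \<union> Sub Q E (GSi Q E D 1)"
    using seq seq_ends_in_Gen_Sub[OF E] by blast
  then have Z2: "Z \<in> GSi Q E D 2"
    using UZ(2) by (simp add: numeral_2_eq_2 in_addcl)
  have "Tt \<in> GSi Q E D 2"
    using GSi_mono_level[OF E D, of 0 2] Tt0 by auto
  then have "dsum Q Tt Z \<in> GSi Q E D 3"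
    using dsum_in_addcl[OF Q Tt UZ(2) _ Z2] addcl_GSi_subset[OF E D, of 2]
    by (auto simp: numeral_3_eq_3 numeral_2_eq_2)
  then have "addcl Q {dsum Q Tt Z} \<subseteq> GSi Q E D 4"
    using addcl_mono[of "{dsum Q Tt Z}" "GSi Q E D 3" Q] addcl_GSi_subset[OF E D, of 3]
    by (auto simp: eval_nat_numeral)
  then show ?thesis
    using addcl_singleton_iso[OF Q T2] unfolding D_def by blast
qed

lemma GS_rep_exchange:
  assumes Q: "wf_quiver Q" and E: "exact_structure Q E" and Tt: "is_rep Q Tt"
    and T1: "iso Q T1 (dsum Q Tt U)" and T2: "iso Q T2 (dsum Q Tt Z)"
    and C: "C \<in> addcl Q {Tt}"
    and seq: "(U, C, Z, f, g) \<in> E \<or> (Z, C, U, f, g) \<in> E"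
  shows "GS_rep Q E T1 = GS_rep Q E T2"
proof -
  have "GS Q E (addcl Q {T2}) \<subseteq> GS Q E (addcl Q {T1})"
    using addcl_exchange_subset_GSi[OF Q E Tt T1 T2 C seq] by (rule GS_subset_if_subset_GSi)
  moreover have "(Z, C, U, f, g) \<in> E \<or> (U, C, Z, f, g) \<in> E"
    using seq by blast
  then have "GS Q E (addcl Q {T1}) \<subseteq> GS Q E (addcl Q {T2})"
    by (rule GS_subset_if_subset_GSi[OF addcl_exchange_subset_GSi[OF Q E Tt T2 T1 C]])
  ultimately show ?thesis
    unfolding GS_rep_def by blast
qed

lemma GS_rep_iso:
  assumes Q: "wf_quiver Q" and AB: "iso Q A B"
  shows "GS_rep Q E A = GS_rep Q E B"
  using addcl_singleton_iso[OF Q AB] addcl_singleton_iso[OF Q iso_sym[OF AB]]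
  unfolding GS_rep_def by (metis subset_antisym)

lemma GS_rep_mut_step:
  assumes Q: "wf_quiver Q" and E: "exact_structure Q E" and step: "mut_step Q E T1 T2"
  shows "GS_rep Q E T1 = GS_rep Q E T2"
proof -
  obtain U where "mutation Q E U T1 T2"
    using step unfolding mut_step_def by blast
  then consider (left) "left_mut Q E T1 U T2" | (right) "right_mut Q E T1 U T2" | (none) "iso Q T1 T2"
    unfolding mutation_def by blast
  then show ?thesis
  proof cases
    case left
    then show ?thesis
      unfolding left_mut_def min_left_approx_def left_approx_def
      using GS_rep_exchange[OF Q E] by blast
  next
    case right
    then show ?thesis
      unfolding right_mut_def min_right_approx_def right_approx_def
      using GS_rep_exchange[OF Q E] by blast
  next
    case none
    then show ?thesis
      using GS_rep_iso[OF Q] by blast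
  qed
qed

theorem proposition5p16:
  fixes Q :: quiver and E :: "'k::field sq set" and T T' :: "'k rep"
  assumes "alg_closed TYPE('k)"
    and "dynkin_ADE Q"
    and "exact_structure Q E"
    and "tilting Q T" and "tilting Q T'"
    and "mut_equiv Q E T' T"
  shows "GS_rep Q E T' = GS_rep Q E T"
proof -
  have Q: "wf_quiver Q"
    using assms(2) by (rule dynkin_ADE_imp_wf_quiver)
  obtain X where chain: "(mut_step Q E)\<^sup>*\<^sup>* T' X" and X: "iso Q X T"
    using assms(6) unfolding mut_equiv_def by blast
  from chain have "GS_rep Q E T' = GS_rep Q E X"
  proof (induction rule: rtranclp_induct)
    case (step Y Z)
    then show ?case using GS_rep_mut_step[OF Q assms(3)] by simp
  qed simp
  also have "\<dots> = GS_rep Q E T"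
    using Q X by (rule GS_rep_iso)
  finally show ?thesis .
qed

end
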